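(* Let $m\ge2$ and let $A(\mathbf z)$, $\mathbf z=(z_1,\dots,z_m)$, be the $(2m+1)\times(2m+1)$ matrix whose rows and columns are indexed, in this order, by $s_0,s_1,\dots,s_m,s_1^{-1},\dots,s_m^{-1}$, with entries: column $s_0$ is zero; row $s_0$ has entry $z_j$ in columns $s_j$ and $s_j^{-1}$ ($1\le j\le m$); row $s_i$ ($1\le i\le m$) has entry $z_j$ in column $s_j$ for all $j$, entry $z_j$ in column $s_j^{-1}$ for $j\ne i$, and $0$ in column $s_i^{-1}$; row $s_i^{-1}$ has entry $z_j$ in column $s_j^{-1}$ for all $j$, entry $z_j$ in column $s_j$ for $j\ne i$, and $0$ in column $s_i$. For $1\le i\le 2m+1$ let $(I-A(\mathbf z):i,1)$ denote the matrix obtained from $I-A(\mathbf z)$ by deleting its $i$-th row and first column. Then $$\sum_{i=1}^{2m+1}(-1)^{i+1}\det\big(I-A(\mathbf z):i,1\big)=(1-z_1^2)\cdots(1-z_m^2).$$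
   Context: $I$ is the $(2m+1)\times(2m+1)$ identity matrix; the identity is between polynomials in $z_1,\dots,z_m$. *)

theory Defs
  imports "Jordan_Normal_Form.Determinant"
begin

text \<open>Index convention (0-based): row/column 0 is s_0, k in 1..m is s_k,
  k in m+1..2m is s_(k-m)^(-1). The variables are z 1, ..., z m.\<close>

definition matA :: "nat \<Rightarrow> (nat \<Rightarrow> 'a::comm_ring_1) \<Rightarrow> 'a mat" where
  "matA m z = mat (2*m+1) (2*m+1) (\<lambda>(r,c).
     if c = 0 then 0
     else if r = 0 then (if c \<le> m then z c else z (c - m))
     else if r \<le> m then
       (if c \<le> m then z c else (if c - m = r then 0 else z (c - m)))
     else
       (if c > m then z (c - m) else (if c = r - m then 0 else z c)))"

end

theory Submission
  imports Defs
begin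

text \<open>By Laplace expansion along the first column, the alternating sum of minors is the
  determinant of the matrix B obtained from I - A by replacing its first column with ones.
  Writing r_0 = (1, -z_1, ..., -z_m, -z_1, ..., -z_m) for its first row, the row of s_i is
  r_0 + e_(s_i) + z_i e_(s_i^-1) and the row of s_i^-1 is
  r_0 + z_i (e_(s_i) + z_i e_(s_i^-1)) + (1 - z_i^2) e_(s_i^-1).
  Hence B = L U with L unit lower triangular and U upper triangular with diagonal
  1, ..., 1, 1 - z_1^2, ..., 1 - z_m^2.\<close>

lemma det_replace_col_laplace:
  assumes A: "(A :: 'a :: comm_ring_1 mat) \<in> carrier_mat n n"
    and b: "b \<in> carrier_vec n" and k: "k < n"
  shows "det (replace_col A b k) = (\<Sum>i<n. b $ i * cofactor A i k)"
proof -
  have Ab: "replace_col A b k \<in> carrier_mat n n"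
    using A by (simp add: replace_col_def)
  have del: "mat_delete (replace_col A b k) i k = mat_delete A i k" for i
    using A by (intro eq_matI) (auto simp: replace_col_def mat_delete_def insert_index_def)
  have "det (replace_col A b k) = (\<Sum>i<n. replace_col A b k $$ (i,k) * cofactor (replace_col A b k) i k)"
    by (rule laplace_expansion_column[OF Ab k])
  also have "\<dots> = (\<Sum>i<n. b $ i * cofactor A i k)"
    using A b k by (intro sum.cong) (auto simp: cofactor_def del, simp add: replace_col_def)
  finally show ?thesis .
qed

lemma alternating_minors_col0_eq_det_replace_col:
  assumes A: "(A :: 'a :: comm_ring_1 mat) \<in> carrier_mat n n" and n: "0 < n"
  shows "(\<Sum>i=1..n. (-1)^(i+1) * det (mat_delete A (i-1) 0))
         = det (replace_col A (vec n (\<lambda>_. 1)) 0)"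
proof -
  have "(\<Sum>i=1..n. (-1)^(i+1) * det (mat_delete A (i-1) 0))
        = (\<Sum>i<n. (-1)^i * det (mat_delete A i 0))"
    using n by (subst sum.atLeastAtMost_shift_0) (auto simp: atLeast0LessThan[symmetric] intro!: sum.cong)
  also have "\<dots> = det (replace_col A (vec n (\<lambda>_. 1)) 0)"
    using A n by (simp add: det_replace_col_laplace cofactor_def)
  finally show ?thesis .
qed

definition matL :: "nat \<Rightarrow> (nat \<Rightarrow> 'a::comm_ring_1) \<Rightarrow> 'a mat" where
  "matL m z = mat (2*m+1) (2*m+1) (\<lambda>(i,k).
     if k = 0 \<or> k = i then 1 else if m < i \<and> k = i - m then z k else 0)"

definition matU :: "nat \<Rightarrow> (nat \<Rightarrow> 'a::comm_ring_1) \<Rightarrow> 'a mat" where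
  "matU m z = mat (2*m+1) (2*m+1) (\<lambda>(k,j).
     if k = 0 then (if j = 0 then 1 else - z (if j \<le> m then j else j - m))
     else if k \<le> m then (if j = k then 1 else if j = k + m then z k else 0)
     else if j = k then 1 - z (k - m)^2 else 0)"

lemma matA_carrier: "matA m z \<in> carrier_mat (2*m+1) (2*m+1)"
  by (simp add: matA_def)

lemma matL_carrier: "matL m z \<in> carrier_mat (2*m+1) (2*m+1)"
  and matU_carrier: "matU m z \<in> carrier_mat (2*m+1) (2*m+1)"
  by (simp_all add: matL_def matU_def)

lemma dim_matL [simp]: "dim_row (matL m z) = 2*m+1" "dim_col (matL m z) = 2*m+1"
  and dim_matU [simp]: "dim_row (matU m z) = 2*m+1" "dim_col (matU m z) = 2*m+1"
  by (simp_all add: matL_def matU_def)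

lemma matL_mult_matU_entry:
  assumes i: "i < 2*m+1" and j: "j < 2*m+1"
  shows "(matL m z * matU m z) $$ (i,j) = matU m z $$ (0,j)
           + (if i \<noteq> 0 then matU m z $$ (i,j) else 0)
           + (if m < i then z (i-m) * matU m z $$ (i-m,j) else 0)"
proof -
  let ?U = "matU m z"
  have L_row: "matL m z $$ (i,k) = (if k = 0 then 1 else 0) + (if k = i \<and> i \<noteq> 0 then 1 else 0)
                 + (if m < i \<and> k = i - m then z (i-m) else 0)" if "k < 2*m+1" for k
    using i that by (auto simp: matL_def)
  have "(matL m z * ?U) $$ (i,j) = (\<Sum>k\<in>{0..<2*m+1}. matL m z $$ (i,k) * ?U $$ (k,j))"
    using i j by (simp add: scalar_prod_def del: sum.op_ivl_Suc)
  also have "\<dots> = (\<Sum>k\<in>{0..<2*m+1}. (if k = 0 then ?U $$ (k,j) else 0)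
        + (if k = i then (if i \<noteq> 0 then ?U $$ (k,j) else 0) else 0)
        + (if k = i - m then (if m < i then z (i-m) * ?U $$ (k,j) else 0) else 0))"
    by (rule sum.cong) (auto simp: L_row distrib_right)
  also have "\<dots> = ?U $$ (0,j) + (if i \<noteq> 0 then ?U $$ (i,j) else 0)
                  + (if m < i then z (i-m) * ?U $$ (i-m,j) else 0)"
    using i unfolding sum.distrib sum.delta[OF finite_atLeastLessThan] by auto
  finally show ?thesis .
qed

lemma replace_col_I_minus_matA_factor:
  "replace_col (1\<^sub>m (2*m+1) - matA m z) (vec (2*m+1) (\<lambda>_. 1)) 0 = matL m z * matU m z"
proof (rule eq_matI)
  fix i j assume "i < dim_row (matL m z * matU m z)" "j < dim_col (matL m z * matU m z)"
  then have i: "i < 2*m+1" and j: "j < 2*m+1" by simp_all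
  show "replace_col (1\<^sub>m (2*m+1) - matA m z) (vec (2*m+1) (\<lambda>_. 1)) 0 $$ (i,j)
        = (matL m z * matU m z) $$ (i,j)"
    using i j unfolding matL_mult_matU_entry[OF i j]
    by (auto simp: replace_col_def matA_def matU_def algebra_simps power2_eq_square)
qed (simp_all add: replace_col_def matA_def matL_def matU_def)

lemma det_matL: "det (matL m z) = 1"
proof -
  have "det (matL m z) = prod_list (diag_mat (matL m z))"
    by (rule det_lower_triangular[OF _ matL_carrier]) (auto simp: matL_def)
  also have "\<dots> = 1"
    by (simp add: prod_list_diag_prod matL_def)
  finally show ?thesis .
qed

lemma det_matU: "det (matU m z) = (\<Prod>j=1..m. 1 - (z j)^2)"
proof -
  have "det (matU m z) = prod_list (diag_mat (matU m z))"
    by (rule det_upper_triangular[OF _ matU_carrier]) (auto simp: matU_def)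
  also have "\<dots> = (\<Prod>k\<in>{0..<2*m+1}. if m < k then 1 - z (k-m)^2 else 1)"
    unfolding prod_list_diag_prod by (intro prod.cong) (auto simp: matU_def)
  also have "\<dots> = (\<Prod>k\<in>{1+m..m+m}. 1 - z (k-m)^2)"
    by (rule prod.mono_neutral_cong_right) auto
  also have "\<dots> = (\<Prod>j=1..m. 1 - (z j)^2)"
    by (subst prod.shift_bounds_cl_nat_ivl) simp
  finally show ?thesis .
qed

theorem lemma2:
  fixes m :: nat and z :: "nat \<Rightarrow> 'a::comm_ring_1"
  assumes "m \<ge> 2"
  shows "(\<Sum>i=1..2*m+1. (-1)^(i+1) *
            det (mat_delete (1\<^sub>m (2*m+1) - matA m z) (i-1) 0))
         = (\<Prod>j=1..m. 1 - (z j)^2)"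
proof -
  \<comment> \<open>The identity holds for every m.\<close>
  have "(\<Sum>i=1..2*m+1. (-1)^(i+1) * det (mat_delete (1\<^sub>m (2*m+1) - matA m z) (i-1) 0))
        = det (replace_col (1\<^sub>m (2*m+1) - matA m z) (vec (2*m+1) (\<lambda>_. 1)) 0)"
    by (rule alternating_minors_col0_eq_det_replace_col[OF minus_carrier_mat[OF matA_carrier]]) simp
  also have "\<dots> = det (matL m z * matU m z)"
    by (simp only: replace_col_I_minus_matA_factor)
  also have "\<dots> = (\<Prod>j=1..m. 1 - (z j)^2)"
    by (simp add: det_mult[OF matL_carrier matU_carrier] det_matL det_matU)
  finally show ?thesis .
qed

end
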